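(* For every $N_0\in\mathbb{N}$ there exists an instance of the binary voting game (as described in the context) with $N>N_0$ agents in which no strong Bayes Nash Equilibrium exists, i.e. no strategy profile is a $0$-strong Bayes Nash Equilibrium.
   Context: Binary voting game. $N$ agents each vote for one of two alternatives $\mathbf{A}$ or $\mathbf{R}$. There is an unobserved world state $W\in\{L,H\}$ with common prior $P_L=\Pr[W=L]>0$, $P_H=\Pr[W=H]>0$. Conditional on $W$, each agent $n$ independently receives a private signal $S_n\in\{l,h\}$ with $P_{sw}=\Pr[S_n=s\mid W=w]$ (identical across agents), where $P_{hH}>P_{hL}$ and $P_{lH}<P_{lL}$. For a threshold $\mu\in(0,1)$, $\mathbf{A}$ wins iff at least $\mu N$ agents vote for $\mathbf{A}$; otherwise $\mathbf{R}$ wins. Each agent $n$ has a utility $v_n:\{L,H\}\times\{\mathbf{A},\mathbf{R}\}\to\{0,1,\dots,B\}$ ($B$ a positive integer) with $v_n(H,\mathbf{A})>v_n(L,\mathbf{A})$ and $v_n(H,\mathbf{R})<v_n(L,\mathbf{R})$. A (mixed) strategy of an agent is a map from her signal to a distribution over $\{\mathbf{A},\mathbf{R}\}$, written $\sigma=(\beta_l,\beta_h)$ where $\beta_s$ is the probability of voting $\mathbf{A}$ on signal $s$; a strategy profile is $\Sigma=(\sigma_1,\dots,\sigma_N)$. Let $\lambda^{\mathbf{A}}_w(\Sigma)$, $\lambda^{\mathbf{R}}_w(\Sigma)$ be the (ex-ante) probabilities that $\mathbf{A}$, resp. $\mathbf{R}$, wins when the state is $w$. The ex-ante expected utility of agent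 $n$ is $u_n(\Sigma)=\sum_{w\in\{L,H\}}P_w\big(\lambda^{\mathbf{A}}_w(\Sigma)v_n(w,\mathbf{A})+\lambda^{\mathbf{R}}_w(\Sigma)v_n(w,\mathbf{R})\big)$. A profile $\Sigma$ is an $\varepsilon$-strong Bayes Nash Equilibrium if there is no set $D$ of agents and profile $\Sigma'$ such that $\sigma'_n=\sigma_n$ for all $n\notin D$, $u_n(\Sigma')\ge u_n(\Sigma)$ for all $n\in D$, and $u_n(\Sigma')>u_n(\Sigma)+\varepsilon$ for some $n\in D$. A strong Bayes Nash Equilibrium is a $0$-strong Bayes Nash Equilibrium. *)

theory Defs
  imports Main "HOL.Real"
begin

datatype world = L | H
datatype signal = l | h
datatype alt = Acc | Rej

text \<open>A mixed strategy of agent n is a map from signals to the probability of voting for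
  alternative A (Acc); a profile assigns strategies to agents 0..N-1.\<close>
type_synonym profile = "nat \<Rightarrow> signal \<Rightarrow> real"

definition valid_profile :: "nat \<Rightarrow> profile \<Rightarrow> bool" where
  "valid_profile N \<Sigma> \<longleftrightarrow> (\<forall>n<N. \<forall>s. 0 \<le> \<Sigma> n s \<and> \<Sigma> n s \<le> 1)"

text \<open>Probability that agent n votes A given state w (signals P s w = Pr[S_n = s | W = w]).\<close>
definition voteA_prob :: "(signal \<Rightarrow> world \<Rightarrow> real) \<Rightarrow> profile \<Rightarrow> nat \<Rightarrow> world \<Rightarrow> real" where
  "voteA_prob P \<Sigma> n w = P l w * \<Sigma> n l + P h w * \<Sigma> n h"

definition lambdaA :: "nat \<Rightarrow> real \<Rightarrow> (signal \<Rightarrow> world \<Rightarrow> real) \<Rightarrow> profile \<Rightarrow> world \<Rightarrow> real" where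
  "lambdaA N \<mu> P \<Sigma> w =
     (\<Sum>S\<in>{S. S \<subseteq> {..<N} \<and> \<mu> * real N \<le> real (card S)}.
        (\<Prod>n\<in>S. voteA_prob P \<Sigma> n w) * (\<Prod>n\<in>{..<N} - S. 1 - voteA_prob P \<Sigma> n w))"

definition lambdaR :: "nat \<Rightarrow> real \<Rightarrow> (signal \<Rightarrow> world \<Rightarrow> real) \<Rightarrow> profile \<Rightarrow> world \<Rightarrow> real" where
  "lambdaR N \<mu> P \<Sigma> w =
     (\<Sum>S\<in>{S. S \<subseteq> {..<N} \<and> \<not> (\<mu> * real N \<le> real (card S))}.
        (\<Prod>n\<in>S. voteA_prob P \<Sigma> n w) * (\<Prod>n\<in>{..<N} - S. 1 - voteA_prob P \<Sigma> n w))"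

definition ex_ante_utility ::
  "nat \<Rightarrow> (world \<Rightarrow> real) \<Rightarrow> (signal \<Rightarrow> world \<Rightarrow> real) \<Rightarrow> real \<Rightarrow>
   (nat \<Rightarrow> world \<Rightarrow> alt \<Rightarrow> nat) \<Rightarrow> nat \<Rightarrow> profile \<Rightarrow> real" where
  "ex_ante_utility N Pw P \<mu> v n \<Sigma> =
     (\<Sum>w\<in>{L, H}. Pw w * (lambdaA N \<mu> P \<Sigma> w * real (v n w Acc)
                          + lambdaR N \<mu> P \<Sigma> w * real (v n w Rej)))"

definition voting_instance ::
  "nat \<Rightarrow> (world \<Rightarrow> real) \<Rightarrow> (signal \<Rightarrow> world \<Rightarrow> real) \<Rightarrow> real \<Rightarrow> nat \<Rightarrow>
   (nat \<Rightarrow> world \<Rightarrow> alt \<Rightarrow> nat) \<Rightarrow> bool" where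
  "voting_instance N Pw P \<mu> B v \<longleftrightarrow>
     Pw L > 0 \<and> Pw H > 0 \<and> Pw L + Pw H = 1 \<and>
     (\<forall>s w. 0 \<le> P s w) \<and> (\<forall>w. P l w + P h w = 1) \<and>
     P h H > P h L \<and> P l H < P l L \<and>
     0 < \<mu> \<and> \<mu> < 1 \<and> B > 0 \<and>
     (\<forall>n<N. \<forall>w a. v n w a \<le> B) \<and>
     (\<forall>n<N. v n H Acc > v n L Acc \<and> v n H Rej < v n L Rej)"

definition eps_strong_BNE ::
  "nat \<Rightarrow> (world \<Rightarrow> real) \<Rightarrow> (signal \<Rightarrow> world \<Rightarrow> real) \<Rightarrow> real \<Rightarrow>
   (nat \<Rightarrow> world \<Rightarrow> alt \<Rightarrow> nat) \<Rightarrow> real \<Rightarrow> profile \<Rightarrow> bool" where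
  "eps_strong_BNE N Pw P \<mu> v \<epsilon> \<Sigma> \<longleftrightarrow>
     valid_profile N \<Sigma> \<and>
     \<not> (\<exists>D \<Sigma>'. D \<subseteq> {..<N} \<and> valid_profile N \<Sigma>' \<and>
          (\<forall>n\<in>{..<N} - D. \<Sigma>' n = \<Sigma> n) \<and>
          (\<forall>n\<in>D. ex_ante_utility N Pw P \<mu> v n \<Sigma>' \<ge> ex_ante_utility N Pw P \<mu> v n \<Sigma>) \<and>
          (\<exists>n\<in>D. ex_ante_utility N Pw P \<mu> v n \<Sigma>' > ex_ante_utility N Pw P \<mu> v n \<Sigma> + \<epsilon>))"

end

theory Submission
  imports Defs
begin

text \<open>
  Take 2k + 3 voters and quota k + 2: k + 1 partisans of A, k + 1 partisans of R (each preferring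
  their alternative in both states) and a judge who wants A to win exactly in state H; signals
  are correct with probability 3/4. In a strong equilibrium neither bloc can gain by always
  voting its side, and switching can only move the winning probability in the bloc's favour, so
  it must leave it unchanged. Once both blocs vote their side the judge decides alone, and
  squeezing between the two bloc deviations shows that A wins exactly with the judge's
  probability of voting A. If she always votes A, she and the R bloc gain by always voting R;
  if she always votes R, she and the A bloc gain when the bloc votes A and she votes sincerely;
  if she votes sincerely, both blocs gain by letting one member each vote sincerely, since a
  majority of three signals is more accurate than one; otherwise she is pivotal with certainty
  and gains by voting sincerely.
\<close>

section \<open>Poisson-binomial tails\<close>

(* The truncation in t - 1 is harmless: the tail at 0 is 1. *)
fun prob_at_least :: "(nat \<Rightarrow> real) \<Rightarrow> nat \<Rightarrow> nat \<Rightarrow> real" where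
  "prob_at_least p 0 t = (if t = 0 then 1 else 0)"
| "prob_at_least p (Suc n) t = p n * prob_at_least p n (t - 1) + (1 - p n) * prob_at_least p n t"

lemma prob_at_least_0 [simp]: "prob_at_least p n 0 = 1"
  by (induction n) auto

lemma prob_at_least_cong:
  "(\<And>i. i < n \<Longrightarrow> p i = q i) \<Longrightarrow> prob_at_least p n t = prob_at_least q n t"
  by (induction n arbitrary: t) auto

lemma prob_at_least_bounds:
  assumes "\<And>i. i < n \<Longrightarrow> 0 \<le> p i \<and> p i \<le> 1"
  shows "0 \<le> prob_at_least p n t \<and> prob_at_least p n t \<le> 1"
  using assms
proof (induction n arbitrary: t)
  case (Suc n)
  then have "0 \<le> p n" "p n \<le> 1" "0 \<le> prob_at_least p n t'" "prob_at_least p n t' \<le> 1" for t'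
    by auto
  then show ?case
    by (auto intro!: convex_bound_le add_nonneg_nonneg mult_nonneg_nonneg)
qed simp

lemma prob_at_least_Suc_le:
  assumes "\<And>i. i < n \<Longrightarrow> 0 \<le> p i \<and> p i \<le> 1"
  shows "prob_at_least p n (Suc t) \<le> prob_at_least p n t"
  using assms
proof (induction n arbitrary: t)
  case (Suc n)
  then have "0 \<le> p n" "p n \<le> 1" by auto
  moreover have "prob_at_least p n t \<le> prob_at_least p n (t - 1)"
    using Suc by (cases t) auto
  moreover have "prob_at_least p n (Suc t) \<le> prob_at_least p n t"
    using Suc by auto
  ultimately show ?case
    by (auto intro!: add_mono mult_left_mono)
qed simp

lemma prob_at_least_mono:
  assumes "\<And>i. i < n \<Longrightarrow> 0 \<le> p i \<and> p i \<le> q i \<and> q i \<le> 1"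
  shows "prob_at_least p n t \<le> prob_at_least q n t"
  using assms
proof (induction n arbitrary: t)
  case (Suc n)
  let ?P = "prob_at_least p n" and ?Q = "prob_at_least q n"
  have pq: "0 \<le> p n" "p n \<le> q n" "q n \<le> 1" using Suc.prems by auto
  have IH: "?P t' \<le> ?Q t'" for t' using Suc by auto
  have "p n * ?P (t - 1) + (1 - p n) * ?P t \<le> p n * ?Q (t - 1) + (1 - p n) * ?Q t"
    using IH pq by (intro add_mono mult_left_mono) auto
  also have "\<dots> \<le> q n * ?Q (t - 1) + (1 - q n) * ?Q t"
  proof -
    \<comment> \<open>Raising p n moves weight from the tail at t to the larger tail at t - 1.\<close>
    have "?Q (Suc t') \<le> ?Q t'" for t'
      using Suc.prems by (intro prob_at_least_Suc_le) (meson less_SucI order_trans)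
    then have "?Q t \<le> ?Q (t - 1)"
      by (cases t) auto
    then have "0 \<le> (q n - p n) * (?Q (t - 1) - ?Q t)"
      using pq by simp
    then show ?thesis by (simp add: algebra_simps)
  qed
  finally show ?case by simp
qed simp

lemma prob_at_least_indicator:
  assumes "S \<subseteq> {..<n}" "\<And>i. i < n \<Longrightarrow> p i = (if i \<in> S then 1 else 0)"
  shows "prob_at_least p n t = (if t \<le> card S then 1 else 0)"
  using assms
proof (induction n arbitrary: S t)
  case (Suc n)
  have IH: "prob_at_least p n t' = (if t' \<le> card (S - {n}) then 1 else 0)" for t'
    using Suc by (intro Suc.IH) auto
  have "finite S" using Suc.prems(1) finite_subset by blast
  then have "n \<in> S \<Longrightarrow> card S = Suc (card (S - {n}))"
    by (metis card_Suc_Diff1)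
  then show ?case
    using Suc.prems(2)[of n] by (cases "n \<in> S") (auto simp: IH)
qed simp

lemma prob_at_least_eq_1:
  assumes "S \<subseteq> {..<n}" "t \<le> card S"
    and "\<And>i. i \<in> S \<Longrightarrow> p i = 1" "\<And>i. i < n \<Longrightarrow> 0 \<le> p i \<and> p i \<le> 1"
  shows "prob_at_least p n t = 1"
proof -
  let ?q = "\<lambda>i. if i \<in> S then 1 else 0 :: real"
  have "prob_at_least ?q n t \<le> prob_at_least p n t"
    using assms by (intro prob_at_least_mono) auto
  moreover have "prob_at_least ?q n t = 1"
    using assms(1,2) by (simp add: prob_at_least_indicator)
  ultimately show ?thesis
    using prob_at_least_bounds[of n p t] assms(4) by simp
qed

lemma prob_at_least_eq_0:
  assumes "S \<subseteq> {..<n}" "card S < t"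
    and "\<And>i. i < n \<Longrightarrow> i \<notin> S \<Longrightarrow> p i = 0" "\<And>i. i < n \<Longrightarrow> 0 \<le> p i \<and> p i \<le> 1"
  shows "prob_at_least p n t = 0"
proof -
  let ?q = "\<lambda>i. if i \<in> S then 1 else 0 :: real"
  have "prob_at_least p n t \<le> prob_at_least ?q n t"
    using assms by (intro prob_at_least_mono) auto
  moreover have "prob_at_least ?q n t = 0"
    using assms(1,2) by (simp add: prob_at_least_indicator)
  ultimately show ?thesis
    using prob_at_least_bounds[of n p t] assms(4) by simp
qed

lemma prob_at_least_majority_of_three:
  assumes "\<And>i. i < 2 * k \<Longrightarrow> p i = (if i < k then 1 else 0)"
    and "p (2 * k) = s" "p (2 * k + 1) = s" "p (2 * k + 2) = s"
  shows "prob_at_least p (2 * k + 3) (k + 2) = 3 * s ^ 2 - 2 * s ^ 3"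
proof -
  have balanced: "prob_at_least p (2 * k) t = (if t \<le> k then 1 else 0)" for t
    using prob_at_least_indicator[of "{..<k}" "2 * k" p t] assms(1) by simp
  have Suc_forms: "2 * k + 3 = Suc (Suc (Suc (2 * k)))" "2 * k + 2 = Suc (Suc (2 * k))"
    "2 * k + 1 = Suc (2 * k)"
    by simp_all
  have "prob_at_least p (2 * k + 3) (k + 2) = s * (s + (1 - s) * s) + (1 - s) * s * s"
    using assms(2-4) unfolding Suc_forms
    by (simp only: prob_at_least.simps balanced) (simp add: algebra_simps)
  also have "\<dots> = 3 * s ^ 2 - 2 * s ^ 3"
    by (simp add: algebra_simps power2_eq_square power3_eq_cube)
  finally show ?thesis .
qed

definition outcome_prob :: "(nat \<Rightarrow> real) \<Rightarrow> nat \<Rightarrow> nat set \<Rightarrow> real" where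
  "outcome_prob p n S = (\<Prod>i\<in>S. p i) * (\<Prod>i\<in>{..<n} - S. 1 - p i)"

lemma outcome_prob_Suc_notin:
  "S \<subseteq> {..<n} \<Longrightarrow> outcome_prob p (Suc n) S = (1 - p n) * outcome_prob p n S"
proof -
  assume "S \<subseteq> {..<n}"
  then have "{..<Suc n} - S = insert n ({..<n} - S)" by (auto simp: lessThan_Suc)
  then show ?thesis by (simp add: outcome_prob_def)
qed

lemma outcome_prob_Suc_insert:
  "S \<subseteq> {..<n} \<Longrightarrow> outcome_prob p (Suc n) (insert n S) = p n * outcome_prob p n S"
proof -
  assume S: "S \<subseteq> {..<n}"
  then have "{..<Suc n} - insert n S = {..<n} - S" by (auto simp: lessThan_Suc)
  moreover have "n \<notin> S" "finite S" using S finite_subset by auto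
  ultimately show ?thesis by (simp add: outcome_prob_def)
qed

lemma prob_at_least_eq_sum_outcomes:
  "prob_at_least p n t = (\<Sum>S\<in>Pow {..<n}. if t \<le> card S then outcome_prob p n S else 0)"
proof (induction n arbitrary: t)
  case 0
  then show ?case by (simp add: outcome_prob_def)
next
  case (Suc n)
  let ?A = "Pow {..<n}"
  let ?f = "\<lambda>S. if t \<le> card S then outcome_prob p (Suc n) S else 0"
  have inj: "inj_on (insert n) ?A"
    by (rule inj_onI) (metis Diff_insert_absorb PowD lessThan_iff less_irrefl subsetD)
  have card_insert: "card (insert n S) = Suc (card S)" if "S \<in> ?A" for S
  proof -
    have "n \<notin> S" "finite S" using that finite_subset by auto
    then show ?thesis by simp
  qed
  have "Pow {..<Suc n} = ?A \<union> insert n ` ?A"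
    by (simp add: lessThan_Suc Pow_insert)
  moreover have "?A \<inter> insert n ` ?A = {}"
    by auto
  ultimately have "(\<Sum>S\<in>Pow {..<Suc n}. ?f S) = (\<Sum>S\<in>?A. ?f S) + (\<Sum>S\<in>insert n ` ?A. ?f S)"
    by (simp add: sum.union_disjoint)
  also have "(\<Sum>S\<in>insert n ` ?A. ?f S) = (\<Sum>S\<in>?A. ?f (insert n S))"
    by (rule sum.reindex[OF inj, unfolded comp_def])
  also have "\<dots> = (\<Sum>S\<in>?A. p n * (if t - 1 \<le> card S then outcome_prob p n S else 0))"
    by (rule sum.cong) (auto simp: card_insert outcome_prob_Suc_insert)
  also have "\<dots> = p n * prob_at_least p n (t - 1)"
    by (simp add: Suc.IH sum_distrib_left)
  also have "(\<Sum>S\<in>?A. ?f S) = (\<Sum>S\<in>?A. (1 - p n) * (if t \<le> card S then outcome_prob p n S else 0))"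
    by (rule sum.cong) (auto simp: outcome_prob_Suc_notin)
  also have "\<dots> = (1 - p n) * prob_at_least p n t"
    by (simp add: Suc.IH sum_distrib_left)
  finally show ?case by simp
qed

lemma lambdaA_eq_sum_outcomes:
  "lambdaA N \<mu> P \<Sigma> w = (\<Sum>S\<in>Pow {..<N}.
     if \<mu> * real N \<le> real (card S) then outcome_prob (\<lambda>n. voteA_prob P \<Sigma> n w) N S else 0)"
  unfolding lambdaA_def outcome_prob_def by (simp add: sum.inter_filter[symmetric] Pow_def)

lemma lambdaR_eq_sum_outcomes:
  "lambdaR N \<mu> P \<Sigma> w = (\<Sum>S\<in>Pow {..<N}.
     if \<not> \<mu> * real N \<le> real (card S) then outcome_prob (\<lambda>n. voteA_prob P \<Sigma> n w) N S else 0)"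
  unfolding lambdaR_def outcome_prob_def by (simp add: sum.inter_filter[symmetric] Pow_def)

lemma lambdaA_eq_prob_at_least:
  assumes "\<mu> * real N = real t"
  shows "lambdaA N \<mu> P \<Sigma> w = prob_at_least (\<lambda>n. voteA_prob P \<Sigma> n w) N t"
  by (simp add: lambdaA_eq_sum_outcomes prob_at_least_eq_sum_outcomes assms)

lemma lambdaR_eq_1_minus_lambdaA: "lambdaR N \<mu> P \<Sigma> w = 1 - lambdaA N \<mu> P \<Sigma> w"
proof -
  have "lambdaA N \<mu> P \<Sigma> w + lambdaR N \<mu> P \<Sigma> w
      = (\<Sum>S\<in>Pow {..<N}. outcome_prob (\<lambda>n. voteA_prob P \<Sigma> n w) N S)"
    unfolding lambdaA_eq_sum_outcomes lambdaR_eq_sum_outcomes sum.distrib[symmetric]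
    by (rule sum.cong) auto
  also have "\<dots> = 1"
    using prob_at_least_eq_sum_outcomes[of _ _ 0] by simp
  finally show ?thesis by simp
qed

section \<open>A game with k + 1 partisans on each side and one judge\<close>

definition signal_prob :: "signal \<Rightarrow> world \<Rightarrow> real" where
  "signal_prob s w = (if (s = h) = (w = H) then 3/4 else 1/4)"

definition uniform_prior :: "world \<Rightarrow> real" where
  "uniform_prior w = 1/2"

definition quota :: "nat \<Rightarrow> real" where
  "quota k = real (k + 2) / real (2 * k + 3)"

(* The last three agents are an R-partisan, an A-partisan and the judge, so that
   prob_at_least_majority_of_three applies when exactly these three vote sincerely. *)
definition A_partisans :: "nat \<Rightarrow> nat set" where
  "A_partisans k = insert (2 * k + 1) {..<k}"

definition R_partisans :: "nat \<Rightarrow> nat set" where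
  "R_partisans k = insert (2 * k) {k..<2 * k}"

definition judge :: "nat \<Rightarrow> nat" where
  "judge k = 2 * k + 2"

definition A_payoff :: "world \<Rightarrow> alt \<Rightarrow> nat" where
  "A_payoff w a = (case (w, a) of (L, Acc) \<Rightarrow> 2 | (L, Rej) \<Rightarrow> 1 | (H, Acc) \<Rightarrow> 3 | (H, Rej) \<Rightarrow> 0)"

definition R_payoff :: "world \<Rightarrow> alt \<Rightarrow> nat" where
  "R_payoff w a = (case (w, a) of (L, Acc) \<Rightarrow> 0 | (L, Rej) \<Rightarrow> 3 | (H, Acc) \<Rightarrow> 1 | (H, Rej) \<Rightarrow> 2)"

definition judge_payoff :: "world \<Rightarrow> alt \<Rightarrow> nat" where
  "judge_payoff w a = (case (w, a) of (L, Acc) \<Rightarrow> 0 | (L, Rej) \<Rightarrow> 2 | (H, Acc) \<Rightarrow> 1 | (H, Rej) \<Rightarrow> 0)"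

definition payoff :: "nat \<Rightarrow> nat \<Rightarrow> world \<Rightarrow> alt \<Rightarrow> nat" where
  "payoff k n = (if n \<in> A_partisans k then A_payoff
                 else if n \<in> R_partisans k then R_payoff else judge_payoff)"

definition expected_payoff :: "nat \<Rightarrow> nat \<Rightarrow> profile \<Rightarrow> real" where
  "expected_payoff k = ex_ante_utility (2 * k + 3) uniform_prior signal_prob (quota k) (payoff k)"

definition vote_prob :: "(signal \<Rightarrow> real) \<Rightarrow> world \<Rightarrow> real" where
  "vote_prob \<sigma> w = signal_prob l w * \<sigma> l + signal_prob h w * \<sigma> h"

definition win_prob :: "nat \<Rightarrow> profile \<Rightarrow> world \<Rightarrow> real" where
  "win_prob k \<Sigma> w = prob_at_least (\<lambda>i. vote_prob (\<Sigma> i) w) (2 * k + 3) (k + 2)"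

lemma judge_less [simp]: "judge k < 2 * k + 3"
  by (simp add: judge_def)

lemma judge_not_partisan [simp]:
  "judge k \<notin> A_partisans k" "judge k \<notin> R_partisans k"
  by (simp_all add: judge_def A_partisans_def R_partisans_def)

lemma card_A_partisans [simp]: "card (A_partisans k) = k + 1"
  by (simp add: A_partisans_def)

lemma signal_prob_h [simp]: "signal_prob h L = 1/4" "signal_prob h H = 3/4"
  by (simp_all add: signal_prob_def)

lemma voting_instance_example: "voting_instance (2 * k + 3) uniform_prior signal_prob (quota k) 3 (payoff k)"
  unfolding voting_instance_def
  by (auto simp: uniform_prior_def signal_prob_def quota_def payoff_def A_payoff_def R_payoff_def
      judge_payoff_def split: world.split alt.split)

lemma expected_payoff_eq:
  "expected_payoff k n \<Sigma> =
     (win_prob k \<Sigma> L * payoff k n L Acc + (1 - win_prob k \<Sigma> L) * payoff k n L Rej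
      + win_prob k \<Sigma> H * payoff k n H Acc + (1 - win_prob k \<Sigma> H) * payoff k n H Rej) / 2"
proof -
  have "quota k * real (2 * k + 3) = real (k + 2)"
    by (simp add: quota_def)
  then have "lambdaA (2 * k + 3) (quota k) signal_prob \<Sigma> w = win_prob k \<Sigma> w" for w
    unfolding lambdaA_eq_prob_at_least[OF \<open>quota k * _ = _\<close>]
    by (simp add: win_prob_def voteA_prob_def vote_prob_def)
  then show ?thesis
    by (simp add: expected_payoff_def ex_ante_utility_def lambdaR_eq_1_minus_lambdaA
        uniform_prior_def field_simps)
qed

lemma expected_payoff_A_partisan:
  "n \<in> A_partisans k \<Longrightarrow> expected_payoff k n \<Sigma> = (1 + win_prob k \<Sigma> L + 3 * win_prob k \<Sigma> H) / 2"
  by (simp add: expected_payoff_eq payoff_def A_payoff_def algebra_simps)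

lemma expected_payoff_R_partisan:
  "n \<in> R_partisans k \<Longrightarrow> expected_payoff k n \<Sigma> = (5 - 3 * win_prob k \<Sigma> L - win_prob k \<Sigma> H) / 2"
  by (auto simp: expected_payoff_eq payoff_def R_payoff_def A_partisans_def R_partisans_def field_simps)

lemma expected_payoff_judge:
  "expected_payoff k (judge k) \<Sigma> = (2 - 2 * win_prob k \<Sigma> L + win_prob k \<Sigma> H) / 2"
  by (simp add: expected_payoff_eq payoff_def judge_payoff_def judge_def A_partisans_def R_partisans_def
      algebra_simps)

definition always_A :: "signal \<Rightarrow> real" where
  "always_A s = 1"

definition always_R :: "signal \<Rightarrow> real" where
  "always_R s = 0"

definition sincere :: "signal \<Rightarrow> real" where
  "sincere s = (if s = h then 1 else 0)"

definition deviate :: "nat set \<Rightarrow> (signal \<Rightarrow> real) \<Rightarrow> profile \<Rightarrow> profile" where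
  "deviate D \<sigma> \<Sigma> n = (if n \<in> D then \<sigma> else \<Sigma> n)"

lemma vote_prob_always_A [simp]: "vote_prob always_A w = 1"
  by (cases w) (simp_all add: vote_prob_def always_A_def signal_prob_def)

lemma vote_prob_always_R [simp]: "vote_prob always_R w = 0"
  by (simp add: vote_prob_def always_R_def)

lemma vote_prob_sincere [simp]: "vote_prob sincere w = signal_prob h w"
  by (simp add: vote_prob_def sincere_def)

lemma vote_prob_bounds:
  assumes "valid_profile N \<Sigma>" "i < N"
  shows "0 \<le> vote_prob (\<Sigma> i) w \<and> vote_prob (\<Sigma> i) w \<le> 1"
proof -
  have "0 \<le> \<Sigma> i l" "\<Sigma> i l \<le> 1" "0 \<le> \<Sigma> i h" "\<Sigma> i h \<le> 1"
    using assms by (simp_all add: valid_profile_def)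
  then show ?thesis
    by (cases w) (auto simp: vote_prob_def signal_prob_def)
qed

lemma valid_profile_deviate:
  assumes "valid_profile N \<Sigma>" "\<And>s. 0 \<le> \<sigma> s \<and> \<sigma> s \<le> 1"
  shows "valid_profile N (deviate D \<sigma> \<Sigma>)"
  using assms by (simp add: valid_profile_def deviate_def)

lemma strategies_bounded [simp]:
  "0 \<le> always_A s" "always_A s \<le> 1" "0 \<le> always_R s" "always_R s \<le> 1"
  "0 \<le> sincere s" "sincere s \<le> 1"
  by (simp_all add: always_A_def always_R_def sincere_def)

lemma vote_prob_deviate:
  "vote_prob (deviate D \<sigma> \<Sigma> i) w = (if i \<in> D then vote_prob \<sigma> w else vote_prob (\<Sigma> i) w)"
  by (simp add: deviate_def)

lemma strategy_cases:
  assumes "0 \<le> \<sigma> l" "\<sigma> l \<le> 1" "0 \<le> \<sigma> h" "\<sigma> h \<le> 1"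
  obtains (always_A) "\<sigma> = always_A" | (always_R) "\<sigma> = always_R" | (sincere) "\<sigma> = sincere"
    | (mixed) "\<sigma> \<noteq> sincere" "\<And>w. 0 < vote_prob \<sigma> w \<and> vote_prob \<sigma> w < 1"
proof -
  have eq: "\<sigma> = \<tau>" if "\<sigma> l = \<tau> l" "\<sigma> h = \<tau> h" for \<tau>
  proof
    fix s show "\<sigma> s = \<tau> s" using that by (cases s) auto
  qed
  consider "\<sigma> l = 1 \<and> \<sigma> h = 1" | "\<sigma> l = 0 \<and> \<sigma> h = 0" | "\<sigma> l = 0 \<and> \<sigma> h = 1"
    | "\<not> (\<sigma> l = 1 \<and> \<sigma> h = 1)" "\<not> (\<sigma> l = 0 \<and> \<sigma> h = 0)" "\<not> (\<sigma> l = 0 \<and> \<sigma> h = 1)"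
    by blast
  then show ?thesis
  proof cases
    case 1
    then have "\<sigma> = always_A" by (intro eq) (simp_all add: always_A_def)
    then show ?thesis by (rule always_A)
  next
    case 2
    then have "\<sigma> = always_R" by (intro eq) (simp_all add: always_R_def)
    then show ?thesis by (rule always_R)
  next
    case 3
    then have "\<sigma> = sincere" by (intro eq) (simp_all add: sincere_def)
    then show ?thesis by (rule sincere)
  next
    case 4
    then have "\<sigma> \<noteq> sincere" by (auto simp: sincere_def)
    moreover have "0 < vote_prob \<sigma> w \<and> vote_prob \<sigma> w < 1" for w
      using assms 4 by (cases w) (auto simp: vote_prob_def signal_prob_def)
    ultimately show ?thesis by (rule mixed)
  qed
qed

definition nonjudge_at_least :: "nat \<Rightarrow> profile \<Rightarrow> world \<Rightarrow> nat \<Rightarrow> real" where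
  "nonjudge_at_least k \<Sigma> w t = prob_at_least (\<lambda>i. vote_prob (\<Sigma> i) w) (2 * k + 2) t"

lemma win_prob_split:
  "win_prob k \<Sigma> w = vote_prob (\<Sigma> (judge k)) w * nonjudge_at_least k \<Sigma> w (k + 1)
     + (1 - vote_prob (\<Sigma> (judge k)) w) * nonjudge_at_least k \<Sigma> w (k + 2)"
proof -
  have "2 * k + 3 = Suc (2 * k + 2)" by simp
  then show ?thesis
    by (simp only: win_prob_def nonjudge_at_least_def prob_at_least.simps) (simp add: judge_def)
qed

lemma nonjudge_at_least_deviate_judge:
  "nonjudge_at_least k (deviate {judge k} \<sigma> \<Sigma>) w t = nonjudge_at_least k \<Sigma> w t"
  unfolding nonjudge_at_least_def by (rule prob_at_least_cong) (simp add: deviate_def judge_def)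

lemma prob_at_least_profile_mono:
  assumes "valid_profile N \<Sigma>" "valid_profile N \<Sigma>'" "m \<le> N"
    and "\<And>i. i < m \<Longrightarrow> vote_prob (\<Sigma> i) w \<le> vote_prob (\<Sigma>' i) w"
  shows "prob_at_least (\<lambda>i. vote_prob (\<Sigma> i) w) m t \<le> prob_at_least (\<lambda>i. vote_prob (\<Sigma>' i) w) m t"
proof (rule prob_at_least_mono)
  fix i assume "i < m"
  then show "0 \<le> vote_prob (\<Sigma> i) w \<and> vote_prob (\<Sigma> i) w \<le> vote_prob (\<Sigma>' i) w \<and> vote_prob (\<Sigma>' i) w \<le> 1"
    using assms vote_prob_bounds[of N \<Sigma> i w] vote_prob_bounds[of N \<Sigma>' i w] by auto
qed

lemma vote_prob_deviate_always_A_ge: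
  "valid_profile N \<Sigma> \<Longrightarrow> i < N \<Longrightarrow> vote_prob (\<Sigma> i) w \<le> vote_prob (deviate D always_A \<Sigma> i) w"
  using vote_prob_bounds[of N \<Sigma> i w] by (simp add: vote_prob_deviate)

lemma vote_prob_deviate_always_R_le:
  "valid_profile N \<Sigma> \<Longrightarrow> i < N \<Longrightarrow> vote_prob (deviate D always_R \<Sigma> i) w \<le> vote_prob (\<Sigma> i) w"
  using vote_prob_bounds[of N \<Sigma> i w] by (simp add: vote_prob_deviate)

lemma nonjudge_at_least_deviate_A_bloc:
  assumes "valid_profile (2 * k + 3) \<Sigma>"
  shows "nonjudge_at_least k (deviate (A_partisans k) always_A \<Sigma>) w (k + 1) = 1"
  unfolding nonjudge_at_least_def
proof (rule prob_at_least_eq_1)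
  show "A_partisans k \<subseteq> {..<2 * k + 2}" by (auto simp: A_partisans_def)
  fix i assume "i < 2 * k + 2"
  then show "0 \<le> vote_prob (deviate (A_partisans k) always_A \<Sigma> i) w
      \<and> vote_prob (deviate (A_partisans k) always_A \<Sigma> i) w \<le> 1"
    using assms by (intro vote_prob_bounds[of "2 * k + 3"] valid_profile_deviate) auto
qed (auto simp: vote_prob_deviate)

lemma nonjudge_at_least_deviate_R_bloc:
  assumes "valid_profile (2 * k + 3) \<Sigma>"
  shows "nonjudge_at_least k (deviate (R_partisans k) always_R \<Sigma>) w (k + 2) = 0"
  unfolding nonjudge_at_least_def
proof (rule prob_at_least_eq_0)
  show "A_partisans k \<subseteq> {..<2 * k + 2}" by (auto simp: A_partisans_def)
  fix i assume "i < 2 * k + 2"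
  then show "0 \<le> vote_prob (deviate (R_partisans k) always_R \<Sigma> i) w
      \<and> vote_prob (deviate (R_partisans k) always_R \<Sigma> i) w \<le> 1"
    using assms by (intro vote_prob_bounds[of "2 * k + 3"] valid_profile_deviate) auto
  assume "i \<notin> A_partisans k"
  with \<open>i < 2 * k + 2\<close> show "vote_prob (deviate (R_partisans k) always_R \<Sigma> i) w = 0"
    by (auto simp: vote_prob_deviate A_partisans_def R_partisans_def)
qed simp

lemma nonjudge_at_least_bounds:
  "valid_profile (2 * k + 3) \<Sigma> \<Longrightarrow> 0 \<le> nonjudge_at_least k \<Sigma> w t \<and> nonjudge_at_least k \<Sigma> w t \<le> 1"
  unfolding nonjudge_at_least_def
  by (rule prob_at_least_bounds) (simp add: vote_prob_bounds)

lemma nonjudge_at_least_deviate_always_A_ge: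
  assumes "valid_profile (2 * k + 3) \<Sigma>"
  shows "nonjudge_at_least k \<Sigma> w t \<le> nonjudge_at_least k (deviate D always_A \<Sigma>) w t"
  unfolding nonjudge_at_least_def
  using assms vote_prob_deviate_always_A_ge[OF assms]
  by (intro prob_at_least_profile_mono[of "2 * k + 3"] valid_profile_deviate) auto

lemma nonjudge_at_least_deviate_always_R_le:
  assumes "valid_profile (2 * k + 3) \<Sigma>"
  shows "nonjudge_at_least k (deviate D always_R \<Sigma>) w t \<le> nonjudge_at_least k \<Sigma> w t"
  unfolding nonjudge_at_least_def
  using assms vote_prob_deviate_always_R_le[OF assms]
  by (intro prob_at_least_profile_mono[of "2 * k + 3"] valid_profile_deviate) auto

lemma win_prob_deviate_always_A_ge:
  assumes "valid_profile (2 * k + 3) \<Sigma>"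
  shows "win_prob k \<Sigma> w \<le> win_prob k (deviate D always_A \<Sigma>) w"
  unfolding win_prob_def
  using assms vote_prob_deviate_always_A_ge[OF assms]
  by (intro prob_at_least_profile_mono[of "2 * k + 3"] valid_profile_deviate) auto

lemma win_prob_deviate_always_R_le:
  assumes "valid_profile (2 * k + 3) \<Sigma>"
  shows "win_prob k (deviate D always_R \<Sigma>) w \<le> win_prob k \<Sigma> w"
  unfolding win_prob_def
  using assms vote_prob_deviate_always_R_le[OF assms]
  by (intro prob_at_least_profile_mono[of "2 * k + 3"] valid_profile_deviate) auto

lemma win_prob_nonneg: "valid_profile (2 * k + 3) \<Sigma> \<Longrightarrow> 0 \<le> win_prob k \<Sigma> w"
  unfolding win_prob_def by (rule prob_at_least_bounds[THEN conjunct1]) (simp add: vote_prob_bounds)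

section \<open>Profitable deviations\<close>

definition profitable_deviation ::
  "nat \<Rightarrow> (nat \<Rightarrow> profile \<Rightarrow> real) \<Rightarrow> profile \<Rightarrow> nat set \<Rightarrow> profile \<Rightarrow> bool" where
  "profitable_deviation N u \<Sigma> D \<Sigma>' \<longleftrightarrow>
     D \<subseteq> {..<N} \<and> valid_profile N \<Sigma>' \<and> (\<forall>n\<in>{..<N} - D. \<Sigma>' n = \<Sigma> n) \<and>
     (\<forall>n\<in>D. u n \<Sigma> \<le> u n \<Sigma>') \<and> (\<exists>n\<in>D. u n \<Sigma> < u n \<Sigma>')"

lemma strong_BNE_iff_no_profitable_deviation:
  "eps_strong_BNE N Pw P \<mu> v 0 \<Sigma> \<longleftrightarrow> valid_profile N \<Sigma> \<and>
     \<not> (\<exists>D \<Sigma>'. profitable_deviation N (ex_ante_utility N Pw P \<mu> v) \<Sigma> D \<Sigma>')"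
  by (simp add: eps_strong_BNE_def profitable_deviation_def)

lemma A_bloc_profits_if_outcome_moves:
  assumes V: "valid_profile (2 * k + 3) \<Sigma>"
    and moves: "win_prob k (deviate (A_partisans k) always_A \<Sigma>) w \<noteq> win_prob k \<Sigma> w"
  shows "profitable_deviation (2 * k + 3) (expected_payoff k) \<Sigma>
           (A_partisans k) (deviate (A_partisans k) always_A \<Sigma>)"
proof -
  let ?\<Sigma>' = "deviate (A_partisans k) always_A \<Sigma>"
  have V': "valid_profile (2 * k + 3) ?\<Sigma>'"
    using V by (intro valid_profile_deviate) auto
  have win_mono: "win_prob k \<Sigma> w' \<le> win_prob k ?\<Sigma>' w'" for w'
    using win_prob_deviate_always_A_ge[OF V] .
  then have strict: "win_prob k \<Sigma> w < win_prob k ?\<Sigma>' w"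
    using moves by (simp add: order.strict_iff_order)
  have "(1 + win_prob k \<Sigma> L + 3 * win_prob k \<Sigma> H) / 2
      < (1 + win_prob k ?\<Sigma>' L + 3 * win_prob k ?\<Sigma>' H) / 2"
    using win_mono[of L] win_mono[of H] strict by (cases w) auto
  then show ?thesis
    using V' unfolding profitable_deviation_def
    by (auto simp: expected_payoff_A_partisan deviate_def A_partisans_def)
qed

lemma R_bloc_profits_if_outcome_moves:
  assumes V: "valid_profile (2 * k + 3) \<Sigma>"
    and moves: "win_prob k (deviate (R_partisans k) always_R \<Sigma>) w \<noteq> win_prob k \<Sigma> w"
  shows "profitable_deviation (2 * k + 3) (expected_payoff k) \<Sigma>
           (R_partisans k) (deviate (R_partisans k) always_R \<Sigma>)"
proof -
  let ?\<Sigma>' = "deviate (R_partisans k) always_R \<Sigma>"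
  have V': "valid_profile (2 * k + 3) ?\<Sigma>'"
    using V by (intro valid_profile_deviate) auto
  have win_mono: "win_prob k ?\<Sigma>' w' \<le> win_prob k \<Sigma> w'" for w'
    using win_prob_deviate_always_R_le[OF V] .
  then have strict: "win_prob k ?\<Sigma>' w < win_prob k \<Sigma> w"
    using moves by (simp add: order.strict_iff_order)
  have "(5 - 3 * win_prob k \<Sigma> L - win_prob k \<Sigma> H) / 2
      < (5 - 3 * win_prob k ?\<Sigma>' L - win_prob k ?\<Sigma>' H) / 2"
    using win_mono[of L] win_mono[of H] strict by (cases w) auto
  then show ?thesis
    using V' unfolding profitable_deviation_def
    by (auto simp: expected_payoff_R_partisan deviate_def R_partisans_def)
qed

lemma R_bloc_and_judge_profit_if_A_certain:
  assumes V: "valid_profile (2 * k + 3) \<Sigma>"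
    and certain: "win_prob k \<Sigma> L = 1" "win_prob k \<Sigma> H = 1"
  shows "profitable_deviation (2 * k + 3) (expected_payoff k) \<Sigma>
           (insert (judge k) (R_partisans k)) (deviate (insert (judge k) (R_partisans k)) always_R \<Sigma>)"
proof -
  let ?\<Sigma>' = "deviate (insert (judge k) (R_partisans k)) always_R \<Sigma>"
  have V': "valid_profile (2 * k + 3) ?\<Sigma>'"
    using V by (intro valid_profile_deviate) auto
  have "win_prob k ?\<Sigma>' w = 0" for w
    unfolding win_prob_def
  proof (rule prob_at_least_eq_0)
    show "A_partisans k \<subseteq> {..<2 * k + 3}" by (auto simp: A_partisans_def)
    fix i assume i: "i < 2 * k + 3"
    then show "0 \<le> vote_prob (?\<Sigma>' i) w \<and> vote_prob (?\<Sigma>' i) w \<le> 1"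
      using V' vote_prob_bounds by blast
    assume "i \<notin> A_partisans k"
    with i show "vote_prob (?\<Sigma>' i) w = 0"
      by (auto simp: vote_prob_deviate judge_def A_partisans_def R_partisans_def)
  qed simp
  then show ?thesis
    using V' certain unfolding profitable_deviation_def
    by (auto simp: expected_payoff_R_partisan expected_payoff_judge deviate_def R_partisans_def)
qed

lemma A_bloc_and_judge_profit_if_R_certain:
  assumes V: "valid_profile (2 * k + 3) \<Sigma>"
    and certain: "\<And>w. win_prob k (deviate (A_partisans k) always_A \<Sigma>) w = 0"
  shows "profitable_deviation (2 * k + 3) (expected_payoff k) \<Sigma> (insert (judge k) (A_partisans k))
           (deviate {judge k} sincere (deviate (A_partisans k) always_A \<Sigma>))"
proof -
  let ?\<Sigma>\<^sub>A = "deviate (A_partisans k) always_A \<Sigma>"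
  let ?\<Sigma>' = "deviate {judge k} sincere ?\<Sigma>\<^sub>A"
  have V\<^sub>A: "valid_profile (2 * k + 3) ?\<Sigma>\<^sub>A"
    using V by (intro valid_profile_deviate) auto
  then have V': "valid_profile (2 * k + 3) ?\<Sigma>'"
    by (rule valid_profile_deviate) auto
  have lost: "win_prob k \<Sigma> w = 0" for w
    using win_prob_deviate_always_A_ge[OF V] win_prob_nonneg[OF V] certain by (metis order_antisym)
  have no_majority: "nonjudge_at_least k ?\<Sigma>\<^sub>A w (k + 2) = 0" for w
  proof -
    let ?p = "vote_prob (\<Sigma> (judge k)) w" and ?q = "nonjudge_at_least k ?\<Sigma>\<^sub>A w (k + 2)"
    have sum: "?p + (1 - ?p) * ?q = 0"
      using certain[of w] win_prob_split[of k ?\<Sigma>\<^sub>A w] nonjudge_at_least_deviate_A_bloc[OF V]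
      by (simp add: deviate_def)
    have "0 \<le> ?p" "?p \<le> 1" "0 \<le> ?q"
      using vote_prob_bounds[OF V judge_less] nonjudge_at_least_bounds[OF V\<^sub>A] by auto
    then have "?p = 0"
      using sum mult_nonneg_nonneg[of "1 - ?p" ?q] by linarith
    then show ?thesis
      using sum by simp
  qed
  have "win_prob k ?\<Sigma>' w = signal_prob h w" for w
    unfolding win_prob_split[of k ?\<Sigma>'] nonjudge_at_least_deviate_judge no_majority
      nonjudge_at_least_deviate_A_bloc[OF V]
    by (simp add: vote_prob_deviate)
  then show ?thesis
    using V' lost unfolding profitable_deviation_def
    by (auto simp: expected_payoff_A_partisan expected_payoff_judge deviate_def A_partisans_def)
qed

lemma partisan_pair_profits_with_sincere_judge:
  assumes V: "valid_profile (2 * k + 3) \<Sigma>"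
    and judge: "\<Sigma> (judge k) = sincere"
    and accuracy: "\<And>w. win_prob k \<Sigma> w = signal_prob h w"
  shows "profitable_deviation (2 * k + 3) (expected_payoff k) \<Sigma> (A_partisans k \<union> R_partisans k)
           (deviate {2 * k, 2 * k + 1} sincere
              (deviate (A_partisans k) always_A (deviate (R_partisans k) always_R \<Sigma>)))"
proof -
  let ?\<Sigma>' = "deviate {2 * k, 2 * k + 1} sincere
                 (deviate (A_partisans k) always_A (deviate (R_partisans k) always_R \<Sigma>))"
  have V': "valid_profile (2 * k + 3) ?\<Sigma>'"
    using V by (intro valid_profile_deviate) auto
  have "win_prob k ?\<Sigma>' w = 3 * signal_prob h w ^ 2 - 2 * signal_prob h w ^ 3" for w
    unfolding win_prob_def
  proof (rule prob_at_least_majority_of_three)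
    fix i assume "i < 2 * k"
    then show "vote_prob (?\<Sigma>' i) w = (if i < k then 1 else 0)"
      by (simp add: vote_prob_deviate A_partisans_def R_partisans_def)
  next
    show "vote_prob (?\<Sigma>' (2 * k + 2)) w = signal_prob h w"
      using judge judge_not_partisan[of k] unfolding judge_def by (simp add: vote_prob_deviate)
  next
    show "vote_prob (?\<Sigma>' (2 * k)) w = signal_prob h w"
      by (simp add: vote_prob_deviate)
  next
    show "vote_prob (?\<Sigma>' (2 * k + 1)) w = signal_prob h w"
      by (simp add: vote_prob_deviate)
  qed
  then have "win_prob k ?\<Sigma>' L = 5/32" "win_prob k ?\<Sigma>' H = 27/32"
    by (simp_all add: power2_eq_square power3_eq_cube)
  then show ?thesis
    using V' accuracy[of L] accuracy[of H] unfolding profitable_deviation_def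
    by (auto simp: expected_payoff_A_partisan expected_payoff_R_partisan deviate_def
        A_partisans_def R_partisans_def)
qed

lemma judge_profits_if_pivotal:
  assumes V: "valid_profile (2 * k + 3) \<Sigma>"
    and pivotal: "\<And>w. nonjudge_at_least k \<Sigma> w (k + 1) = 1" "\<And>w. nonjudge_at_least k \<Sigma> w (k + 2) = 0"
    and insincere: "\<Sigma> (judge k) \<noteq> sincere"
  shows "profitable_deviation (2 * k + 3) (expected_payoff k) \<Sigma> {judge k}
           (deviate {judge k} sincere \<Sigma>)"
proof -
  let ?\<sigma> = "\<Sigma> (judge k)" and ?\<Sigma>' = "deviate {judge k} sincere \<Sigma>"
  have V': "valid_profile (2 * k + 3) ?\<Sigma>'"
    using V by (intro valid_profile_deviate) auto
  have before: "win_prob k \<Sigma> w = vote_prob ?\<sigma> w" for w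
    using win_prob_split[of k \<Sigma> w] pivotal by simp
  have after: "win_prob k ?\<Sigma>' w = signal_prob h w" for w
    using win_prob_split[of k ?\<Sigma>' w] pivotal by (simp add: nonjudge_at_least_deviate_judge deviate_def)
  have "?\<sigma> l \<noteq> 0 \<or> ?\<sigma> h \<noteq> 1"
  proof (rule ccontr)
    assume "\<not> (?\<sigma> l \<noteq> 0 \<or> ?\<sigma> h \<noteq> 1)"
    then have "?\<sigma> s = sincere s" for s
      by (cases s) (simp_all add: sincere_def)
    with insincere show False by auto
  qed
  moreover have "0 \<le> ?\<sigma> l" "?\<sigma> h \<le> 1"
    using V by (auto simp: valid_profile_def)
  ultimately have "expected_payoff k (judge k) \<Sigma> < expected_payoff k (judge k) ?\<Sigma>'"
    by (auto simp: expected_payoff_judge before after vote_prob_def signal_prob_def)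
  then show ?thesis
    using V' unfolding profitable_deviation_def by (auto simp: deviate_def)
qed

lemma convex_combination_cancel:
  fixes p a b a' b' :: real
  assumes "0 < p" "p < 1" "a \<le> a'" "b \<le> b'" "p * a + (1 - p) * b = p * a' + (1 - p) * b'"
  shows "a = a'" "b = b'"
proof -
  have "0 \<le> p * (a' - a)" "0 \<le> (1 - p) * (b' - b)"
    using assms by simp_all
  moreover have "p * (a' - a) + (1 - p) * (b' - b) = 0"
    using assms(5) by (simp add: algebra_simps)
  ultimately have "p * (a' - a) = 0" "(1 - p) * (b' - b) = 0"
    by linarith+
  then show "a = a'" "b = b'"
    using assms(1,2) by simp_all
qed

lemma win_prob_eq_judge_vote:
  assumes V: "valid_profile (2 * k + 3) \<Sigma>"
    and A_stable: "win_prob k (deviate (A_partisans k) always_A \<Sigma>) w = win_prob k \<Sigma> w"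
    and R_stable: "win_prob k (deviate (R_partisans k) always_R \<Sigma>) w = win_prob k \<Sigma> w"
  shows "win_prob k \<Sigma> w = vote_prob (\<Sigma> (judge k)) w"
proof -
  let ?\<Sigma>\<^sub>A = "deviate (A_partisans k) always_A \<Sigma>" and ?\<Sigma>\<^sub>R = "deviate (R_partisans k) always_R \<Sigma>"
  let ?p = "vote_prob (\<Sigma> (judge k)) w"
  have V\<^sub>A: "valid_profile (2 * k + 3) ?\<Sigma>\<^sub>A" and V\<^sub>R: "valid_profile (2 * k + 3) ?\<Sigma>\<^sub>R"
    using V by (auto intro: valid_profile_deviate)
  have p: "0 \<le> ?p" "?p \<le> 1"
    using vote_prob_bounds[OF V judge_less] by auto
  have "win_prob k ?\<Sigma>\<^sub>A w = ?p + (1 - ?p) * nonjudge_at_least k ?\<Sigma>\<^sub>A w (k + 2)"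
    unfolding win_prob_split[of k ?\<Sigma>\<^sub>A] nonjudge_at_least_deviate_A_bloc[OF V] by (simp add: vote_prob_deviate)
  moreover have "win_prob k ?\<Sigma>\<^sub>R w = ?p * nonjudge_at_least k ?\<Sigma>\<^sub>R w (k + 1)"
    unfolding win_prob_split[of k ?\<Sigma>\<^sub>R] nonjudge_at_least_deviate_R_bloc[OF V] by (simp add: vote_prob_deviate)
  moreover have "0 \<le> (1 - ?p) * nonjudge_at_least k ?\<Sigma>\<^sub>A w (k + 2)"
    using p nonjudge_at_least_bounds[OF V\<^sub>A] by simp
  moreover have "?p * nonjudge_at_least k ?\<Sigma>\<^sub>R w (k + 1) \<le> ?p"
    using p nonjudge_at_least_bounds[OF V\<^sub>R] by (simp add: mult_left_le)
  ultimately show ?thesis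
    using A_stable R_stable by linarith
qed

lemma judge_pivotal:
  assumes V: "valid_profile (2 * k + 3) \<Sigma>"
    and mixed: "0 < vote_prob (\<Sigma> (judge k)) w" "vote_prob (\<Sigma> (judge k)) w < 1"
    and A_stable: "win_prob k (deviate (A_partisans k) always_A \<Sigma>) w = win_prob k \<Sigma> w"
    and R_stable: "win_prob k (deviate (R_partisans k) always_R \<Sigma>) w = win_prob k \<Sigma> w"
  shows "nonjudge_at_least k \<Sigma> w (k + 1) = 1" "nonjudge_at_least k \<Sigma> w (k + 2) = 0"
proof -
  let ?\<Sigma>\<^sub>A = "deviate (A_partisans k) always_A \<Sigma>" and ?\<Sigma>\<^sub>R = "deviate (R_partisans k) always_R \<Sigma>"
  let ?p = "vote_prob (\<Sigma> (judge k)) w" and ?Q = "nonjudge_at_least k"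
  have split: "win_prob k \<Sigma>' w = ?p * ?Q \<Sigma>' w (k + 1) + (1 - ?p) * ?Q \<Sigma>' w (k + 2)"
    if "\<Sigma>' (judge k) = \<Sigma> (judge k)" for \<Sigma>'
    using win_prob_split[of k \<Sigma>' w] that by simp
  have "?Q \<Sigma> w (k + 1) = 1"
  proof (rule convex_combination_cancel(1)[OF mixed])
    show "?Q \<Sigma> w (k + 1) \<le> 1" "?Q \<Sigma> w (k + 2) \<le> ?Q ?\<Sigma>\<^sub>A w (k + 2)"
      using nonjudge_at_least_bounds[OF V] nonjudge_at_least_deviate_always_A_ge[OF V] by auto
    show "?p * ?Q \<Sigma> w (k + 1) + (1 - ?p) * ?Q \<Sigma> w (k + 2) = ?p * 1 + (1 - ?p) * ?Q ?\<Sigma>\<^sub>A w (k + 2)"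
      using A_stable split[of \<Sigma>] split[of ?\<Sigma>\<^sub>A] nonjudge_at_least_deviate_A_bloc[OF V]
      by (simp add: deviate_def)
  qed
  moreover have "0 = ?Q \<Sigma> w (k + 2)"
  proof (rule convex_combination_cancel(2)[OF mixed])
    show "?Q ?\<Sigma>\<^sub>R w (k + 1) \<le> ?Q \<Sigma> w (k + 1)" "0 \<le> ?Q \<Sigma> w (k + 2)"
      using nonjudge_at_least_bounds[OF V] nonjudge_at_least_deviate_always_R_le[OF V] by auto
    show "?p * ?Q ?\<Sigma>\<^sub>R w (k + 1) + (1 - ?p) * 0 = ?p * ?Q \<Sigma> w (k + 1) + (1 - ?p) * ?Q \<Sigma> w (k + 2)"
      using R_stable split[of \<Sigma>] split[of ?\<Sigma>\<^sub>R] nonjudge_at_least_deviate_R_bloc[OF V]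
      by (simp add: deviate_def)
  qed
  ultimately show "?Q \<Sigma> w (k + 1) = 1" "?Q \<Sigma> w (k + 2) = 0"
    by simp_all
qed

lemma profitable_deviation_exists:
  assumes V: "valid_profile (2 * k + 3) \<Sigma>"
  shows "\<exists>D \<Sigma>'. profitable_deviation (2 * k + 3) (expected_payoff k) \<Sigma> D \<Sigma>'"
proof (rule ccontr)
  assume stable: "\<nexists>D \<Sigma>'. profitable_deviation (2 * k + 3) (expected_payoff k) \<Sigma> D \<Sigma>'"
  let ?\<Sigma>\<^sub>A = "deviate (A_partisans k) always_A \<Sigma>" and ?\<Sigma>\<^sub>R = "deviate (R_partisans k) always_R \<Sigma>"
  let ?\<sigma> = "\<Sigma> (judge k)"
  have A_stable: "win_prob k ?\<Sigma>\<^sub>A w = win_prob k \<Sigma> w" for w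
    using A_bloc_profits_if_outcome_moves[OF V] stable by blast
  have R_stable: "win_prob k ?\<Sigma>\<^sub>R w = win_prob k \<Sigma> w" for w
    using R_bloc_profits_if_outcome_moves[OF V] stable by blast
  have win: "win_prob k \<Sigma> w = vote_prob ?\<sigma> w" for w
    using win_prob_eq_judge_vote[OF V A_stable R_stable] .
  have "0 \<le> ?\<sigma> l" "?\<sigma> l \<le> 1" "0 \<le> ?\<sigma> h" "?\<sigma> h \<le> 1"
    using V judge_less[of k] by (simp_all add: valid_profile_def)
  then show False
  proof (cases rule: strategy_cases)
    case always_A
    then show False
      using R_bloc_and_judge_profit_if_A_certain[OF V] win stable by auto
  next
    case always_R
    then have "win_prob k ?\<Sigma>\<^sub>A w = 0" for w
      using A_stable win by simp
    then show False
      using A_bloc_and_judge_profit_if_R_certain[OF V] stable by blast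
  next
    case sincere
    then show False
      using partisan_pair_profits_with_sincere_judge[OF V] win stable by auto
  next
    case mixed
    then have "nonjudge_at_least k \<Sigma> w (k + 1) = 1" "nonjudge_at_least k \<Sigma> w (k + 2) = 0" for w
      using judge_pivotal[OF V _ _ A_stable R_stable] by auto
    then show False
      using judge_profits_if_pivotal[OF V] mixed stable by blast
  qed
qed

theorem theorem1:
  shows "\<forall>N0::nat. \<exists>N Pw P \<mu> B v. N > N0 \<and> voting_instance N Pw P \<mu> B v \<and>
           \<not> (\<exists>\<Sigma>. eps_strong_BNE N Pw P \<mu> v 0 \<Sigma>)"
proof
  fix N0 :: nat
  have "\<not> eps_strong_BNE (2 * N0 + 3) uniform_prior signal_prob (quota N0) (payoff N0) 0 \<Sigma>" for \<Sigma>
    using profitable_deviation_exists[of N0 \<Sigma>]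
    by (auto simp: strong_BNE_iff_no_profitable_deviation expected_payoff_def)
  moreover have "N0 < 2 * N0 + 3"
    by simp
  ultimately show "\<exists>N Pw P \<mu> B v. N > N0 \<and> voting_instance N Pw P \<mu> B v \<and>
           \<not> (\<exists>\<Sigma>. eps_strong_BNE N Pw P \<mu> v 0 \<Sigma>)"
    using voting_instance_example by blast
qed

end
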